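(* Let $\mathfrak{n}$ be the real $7$-dimensional Lie algebra with basis $e_1,\dots,e_7$ whose nonzero brackets (up to antisymmetry) are $[e_1,e_2]=e_4$, $[e_1,e_4]=e_6$, $[e_1,e_6]=e_7$, $[e_2,e_3]=e_6$, $[e_2,e_4]=e_7$, $[e_3,e_4]=-e_7$, $[e_3,e_5]=-e_7$. Then $\mathfrak{n}$ is not an Einstein nilradical.
   Context: A real nilpotent Lie algebra $\mathfrak{n}$ is called an Einstein nilradical if it admits an inner product such that the left-invariant Riemannian metric it defines on the simply connected nilpotent Lie group with Lie algebra $\mathfrak{n}$ is a nilsoliton, i.e. its Ricci operator satisfies $\mathrm{Ric}=c\,\mathrm{Id}+D$ for some $c\in\mathbb{R}$ and some derivation $D$ of $\mathfrak{n}$. Brackets of basis elements not listed are zero. *)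

theory Defs
  imports "HOL-Analysis.Analysis" "HOL-Library.Numeral_Type"
begin

text \<open>A real Lie algebra structure on \<open>real^'n\<close> is given by a bracket
  \<open>br\<close>; vectors in \<open>real^'n\<close> are coordinate vectors w.r.t. the basis
  \<open>e_1, ..., e_n\<close>.\<close>

definition is_inner_product :: "('a::real_vector \<Rightarrow> 'a \<Rightarrow> real) \<Rightarrow> bool" where
  "is_inner_product ip \<longleftrightarrow> bilinear ip \<and> (\<forall>x y. ip x y = ip y x) \<and> (\<forall>x. x \<noteq> 0 \<longrightarrow> ip x x > 0)"

definition orthonormal_basis :: "('a::real_vector \<Rightarrow> 'a \<Rightarrow> real) \<Rightarrow> ('n::finite \<Rightarrow> 'a) \<Rightarrow> bool" where
  "orthonormal_basis ip u \<longleftrightarrow> (\<forall>i j. ip (u i) (u j) = (if i = j then 1 else 0)) \<and> span (range u) = UNIV"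

text \<open>Ricci form of the left-invariant metric defined by \<open>ip\<close> on the nilpotent Lie group,
  computed in an orthonormal basis \<open>u\<close>:
  \<open><Ric X, Y> = -1/2 sum_{i,j} <[X,u_i],u_j><[Y,u_i],u_j> + 1/4 sum_{i,j} <[u_i,u_j],X><[u_i,u_j],Y>\<close>.\<close>
definition ricci_form ::
  "(real^'n \<Rightarrow> real^'n \<Rightarrow> real^'n) \<Rightarrow> (real^'n \<Rightarrow> real^'n \<Rightarrow> real) \<Rightarrow> ('n::finite \<Rightarrow> real^'n)
     \<Rightarrow> real^'n \<Rightarrow> real^'n \<Rightarrow> real" where
  "ricci_form br ip u X Y =
     - (1/2) * (\<Sum>i\<in>UNIV. \<Sum>j\<in>UNIV. ip (br X (u i)) (u j) * ip (br Y (u i)) (u j))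
     + (1/4) * (\<Sum>i\<in>UNIV. \<Sum>j\<in>UNIV. ip (br (u i) (u j)) X * ip (br (u i) (u j)) Y)"

definition is_derivation :: "(real^'n \<Rightarrow> real^'n \<Rightarrow> real^'n) \<Rightarrow> (real^'n \<Rightarrow> real^'n) \<Rightarrow> bool" where
  "is_derivation br D \<longleftrightarrow> linear D \<and> (\<forall>x y. D (br x y) = br (D x) y + br x (D y))"

definition is_nilsoliton :: "(real^'n::finite \<Rightarrow> real^'n \<Rightarrow> real^'n) \<Rightarrow> (real^'n \<Rightarrow> real^'n \<Rightarrow> real) \<Rightarrow> bool" where
  "is_nilsoliton br ip \<longleftrightarrow>
     (\<exists>(u::'n \<Rightarrow> real^'n) Ric c D. orthonormal_basis ip u \<and> linear Ric \<and>
        (\<forall>X Y. ip (Ric X) Y = ricci_form br ip u X Y) \<and>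
        is_derivation br D \<and> (\<forall>X. Ric X = c *\<^sub>R X + D X))"

definition einstein_nilradical :: "(real^'n::finite \<Rightarrow> real^'n \<Rightarrow> real^'n) \<Rightarrow> bool" where
  "einstein_nilradical br \<longleftrightarrow> (\<exists>ip. is_inner_product ip \<and> is_nilsoliton br ip)"

text \<open>Standard basis \<open>e_1,...,e_7\<close> of \<open>real^7\<close>; component \<open>k\<close> is \<open>x $ k\<close>
  (the index \<open>7\<close> of type \<open>7\<close> is the numeral 7, equal to 0 in that type; all 7 indices distinct).\<close>
definition ee :: "7 \<Rightarrow> real^7" where "ee k = axis k 1"

text \<open>The bracket: bilinear extension of
  [e1,e2]=e4, [e1,e4]=e6, [e1,e6]=e7, [e2,e3]=e6, [e2,e4]=e7, [e3,e4]=-e7, [e3,e5]=-e7.\<close>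
definition brN :: "real^7 \<Rightarrow> real^7 \<Rightarrow> real^7" where
  "brN x y =
     (x$1 * y$2 - x$2 * y$1) *\<^sub>R ee 4
   + ((x$1 * y$4 - x$4 * y$1) + (x$2 * y$3 - x$3 * y$2)) *\<^sub>R ee 6
   + ((x$1 * y$6 - x$6 * y$1) + (x$2 * y$4 - x$4 * y$2)
      - (x$3 * y$4 - x$4 * y$3) - (x$3 * y$5 - x$5 * y$3)) *\<^sub>R ee 7"

end

theory Submission
  imports Defs
begin

text \<open>With the grading \<open>degN = (1, 2, 2, 3, 3, 4, 5)\<close> of the basis, every derivation of the
  algebra is \<open>t\<close> times the grading derivation plus a map raising the degree. For a nilsoliton
  \<open>Ric = c Id + D\<close> the trace identities \<open>tr (Ric \<circ> grading) = 0\<close> and \<open>tr Ric < 0\<close> read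
  \<open>20 c + 68 t = 0\<close> and \<open>7 c + 20 t < 0\<close>, so \<open>t > 0\<close>. Then the symmetric map \<open>D\<close> has an
  orthonormal eigenbasis adapted to the coordinates, on which \<open>Ric\<close> has diagonal entries
  \<open>c + t degN l\<close>. These are orthogonal to a weight vector \<open>w\<close> with
  \<open>\<Sum>l w l Ric l l = 1/4 \<Sum>(w k - w i - w j) C i j k\<^sup>2\<close>, where all terms are nonnegative.
  Hence the structure constants of positive weight vanish: the bracket pairing degree 2 with
  degree 3 into degree 5 would kill a nonzero vector of degree 2, but this pairing is
  nondegenerate.\<close>

section \<open>Inner products and orthonormal bases\<close>

lemma is_inner_product_linear:
  assumes "is_inner_product ip"
  shows "linear (\<lambda>x. ip x z)" "linear (\<lambda>z. ip x z)"
  using assms by (simp_all add: is_inner_product_def bilinear_def)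

lemma is_inner_product_simps:
  assumes "is_inner_product ip"
  shows "ip (a *\<^sub>R x) z = a * ip x z" "ip z (a *\<^sub>R x) = a * ip z x"
    "ip (x + y) z = ip x z + ip y z" "ip z (x + y) = ip z x + ip z y"
    "ip (x - y) z = ip x z - ip y z" "ip z (x - y) = ip z x - ip z y"
    "ip (- x) z = - ip x z" "ip z (- x) = - ip z x"
    "ip 0 z = 0" "ip z 0 = 0"
    "ip (\<Sum>l\<in>A. f l) z = (\<Sum>l\<in>A. ip (f l) z)" "ip z (\<Sum>l\<in>A. f l) = (\<Sum>l\<in>A. ip z (f l))"
proof -
  have "bilinear ip" using assms by (simp add: is_inner_product_def)
  then show "ip (a *\<^sub>R x) z = a * ip x z" "ip z (a *\<^sub>R x) = a * ip z x"
    "ip (x + y) z = ip x z + ip y z" "ip z (x + y) = ip z x + ip z y"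
    "ip (x - y) z = ip x z - ip y z" "ip z (x - y) = ip z x - ip z y"
    "ip (- x) z = - ip x z" "ip z (- x) = - ip z x" "ip 0 z = 0" "ip z 0 = 0"
    by (simp_all add: bilinear_lmul bilinear_rmul bilinear_ladd bilinear_radd bilinear_lsub
        bilinear_rsub bilinear_lneg bilinear_rneg bilinear_lzero bilinear_rzero)
  show "ip (\<Sum>l\<in>A. f l) z = (\<Sum>l\<in>A. ip (f l) z)" "ip z (\<Sum>l\<in>A. f l) = (\<Sum>l\<in>A. ip z (f l))"
    using linear_sum[OF is_inner_product_linear(1)[OF assms]]
      linear_sum[OF is_inner_product_linear(2)[OF assms]] by blast+
qed

lemma is_inner_product_sym: "is_inner_product ip \<Longrightarrow> ip x y = ip y x"
  by (simp add: is_inner_product_def)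

lemma is_inner_product_self_eq_0: "is_inner_product ip \<Longrightarrow> ip x x = 0 \<longleftrightarrow> x = 0"
  by (metis is_inner_product_def is_inner_product_simps(9) less_irrefl)

lemma is_inner_product_self_nonneg: "is_inner_product ip \<Longrightarrow> ip x x \<ge> 0"
  by (metis is_inner_product_def is_inner_product_simps(9) less_eq_real_def)

lemma symmetric_eigenvectors_orthogonal:
  assumes ip: "is_inner_product ip" and D_sym: "\<And>x z. ip (D x) z = ip x (D z)"
    and "D v = a *\<^sub>R v" and "D w = b *\<^sub>R w" and "a \<noteq> b"
  shows "ip v w = 0"
proof -
  have "a * ip v w = b * ip v w"
    using D_sym[of v w] assms(3,4) by (simp add: is_inner_product_simps[OF ip])
  with \<open>a \<noteq> b\<close> show ?thesis by simp
qed

lemma gram_schmidt_orthogonal: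
  assumes ip: "is_inner_product ip" and "b \<noteq> 0"
  shows "ip (a - (ip a b / ip b b) *\<^sub>R b) b = 0"
  using is_inner_product_self_eq_0[OF ip, of b] assms(2) by
    (simp add: is_inner_product_simps[OF ip])

definition normalized :: "('a::real_vector \<Rightarrow> 'a \<Rightarrow> real) \<Rightarrow> 'a \<Rightarrow> 'a" where
  "normalized ip v = (1 / sqrt (ip v v)) *\<^sub>R v"

lemma normalized_unit:
  assumes ip: "is_inner_product ip" and "v \<noteq> 0"
  shows "ip (normalized ip v) (normalized ip v) = 1"
proof -
  have "ip v v > 0"
    using is_inner_product_self_nonneg[OF ip] is_inner_product_self_eq_0[OF ip] assms(2)
    by (simp add: order_less_le)
  then show ?thesis by
    (simp add: normalized_def is_inner_product_simps[OF ip] real_sqrt_mult[symmetric])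
qed

lemma normalized_component_eq_0:
  assumes ip: "is_inner_product ip" and "v \<noteq> 0"
  shows "normalized ip v $ i = 0 \<longleftrightarrow> v $ i = 0"
  using is_inner_product_self_eq_0[OF ip] assms(2) by (simp add: normalized_def)

definition orthonormal_system :: "('a::real_vector \<Rightarrow> 'a \<Rightarrow> real) \<Rightarrow> ('n \<Rightarrow> 'a) \<Rightarrow> bool" where
  "orthonormal_system ip y \<longleftrightarrow> (\<forall>i j. ip (y i) (y j) = (if i = j then 1 else 0))"

lemma orthonormal_basis_expansion:
  fixes u :: "'n::finite \<Rightarrow> 'a::real_vector"
  assumes ip: "is_inner_product ip" and u: "orthonormal_basis ip u"
  shows "x = (\<Sum>l\<in>UNIV. ip x (u l) *\<^sub>R u l)"
proof -
  have on: "ip (u i) (u j) = (if i = j then 1 else 0)" for i j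
    using u by (simp add: orthonormal_basis_def)
  have "inj u"
    by (rule injI) (metis on zero_neq_one)
  have "x \<in> span (range u)" using u by (simp add: orthonormal_basis_def)
  then obtain c where c: "x = (\<Sum>v\<in>range u. c v *\<^sub>R v)"
    using real_vector.span_finite[of "range u"] by auto
  then have cx: "x = (\<Sum>l\<in>UNIV. c (u l) *\<^sub>R u l)"
    by (simp add: sum.reindex[OF \<open>inj u\<close>])
  have "ip x (u m) = c (u m)" for m
    by (subst cx) (simp add: is_inner_product_simps[OF ip] on if_distrib cong: if_cong)
  then show ?thesis using cx by simp
qed

lemma orthonormal_basis_parseval:
  fixes u :: "'n::finite \<Rightarrow> 'a::real_vector"
  assumes ip: "is_inner_product ip" and u: "orthonormal_basis ip u"
  shows "ip x z = (\<Sum>l\<in>UNIV. ip x (u l) * ip z (u l))"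
  by (subst orthonormal_basis_expansion[OF ip u, of x])
    (simp add: is_inner_product_simps[OF ip] is_inner_product_sym[OF ip, of "u _" z])

lemma orthonormal_basis_orthogonal_eq_0:
  fixes u :: "'n::finite \<Rightarrow> 'a::real_vector"
  assumes ip: "is_inner_product ip" and u: "orthonormal_basis ip u" and "\<And>k. ip w (u k) = 0"
  shows "w = 0"
  using orthonormal_basis_expansion[OF ip u, of w] assms(3) by simp

lemma bilinear_mult_linear:
  fixes f g :: "'a::real_vector \<Rightarrow> real"
  assumes "linear f" and "linear g"
  shows "bilinear (\<lambda>x z. f x * g z)"
proof -
  have "linear (\<lambda>z. f x * g z)" for x
    using linear_compose_scale_right[OF \<open>linear g\<close>] by simp
  moreover have "linear (\<lambda>x. f x * g z)" for z
    by (subst mult.commute) (use linear_compose_scale_right[OF \<open>linear f\<close>] in simp)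
  ultimately show ?thesis
    by (simp add: bilinear_def)
qed

lemma orthonormal_system_bilinear_trace_eq:
  fixes u y :: "'n::finite \<Rightarrow> 'a::real_vector"
  assumes ip: "is_inner_product ip" and u: "orthonormal_basis ip u"
    and y: "orthonormal_system ip y" and g: "bilinear (g :: 'a \<Rightarrow> 'a \<Rightarrow> real)"
  shows "(\<Sum>l\<in>UNIV. g (u l) (u l)) = (\<Sum>l\<in>UNIV. g (y l) (y l))"
proof -
  define Q :: "real^'n^'n" where "Q = (\<chi> m l. ip (y m) (u l))"
  have y_exp: "y m = (\<Sum>l\<in>UNIV. Q $ m $ l *\<^sub>R u l)" for m
    using orthonormal_basis_expansion[OF ip u, of "y m"] by (simp add: Q_def)
  txt \<open>\<open>Q\<close> is square, so \<open>Q Q\<^sup>T = 1\<close> also gives orthonormal columns.\<close>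
  have "Q ** transpose Q = mat 1"
    using y orthonormal_basis_parseval[OF ip u, of "y _" "y _"]
    by (simp add: vec_eq_iff matrix_matrix_mult_def transpose_def mat_def Q_def
        orthonormal_system_def)
  then have "transpose Q ** Q = mat 1" by (simp add: matrix_left_right_inverse)
  then have Q_cols: "(\<Sum>m\<in>UNIV. Q $ m $ l * Q $ m $ l') = (if l = l' then 1 else 0)" for l l'
    by (simp add: vec_eq_iff matrix_matrix_mult_def transpose_def mat_def)
  have gl: "linear (\<lambda>x. g x z)" and gr: "linear (\<lambda>z. g x z)" for x z
    using g by (simp_all add: bilinear_def)
  have "g (y m) (y m) = (\<Sum>l\<in>UNIV. \<Sum>l'\<in>UNIV. Q $ m $ l * Q $ m $ l' * g (u l) (u l'))" for m
    by (simp add: y_exp[of m] linear_sum[OF gl] linear_scale[OF gl] linear_sum[OF gr]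
        linear_scale[OF gr] sum_distrib_left mult.assoc)
      (subst sum.swap, simp add: ac_simps)
  then have "(\<Sum>m\<in>UNIV. g (y m) (y m))
      = (\<Sum>m\<in>UNIV. \<Sum>l\<in>UNIV. \<Sum>l'\<in>UNIV. Q $ m $ l * Q $ m $ l' * g (u l) (u l'))" by simp
  also have "\<dots> = (\<Sum>l\<in>UNIV. \<Sum>l'\<in>UNIV. (\<Sum>m\<in>UNIV. Q $ m $ l * Q $ m $ l') * g (u l) (u l'))"
    by (subst sum.swap, rule sum.cong[OF refl], subst sum.swap) (simp add: sum_distrib_right)
  also have "\<dots> = (\<Sum>l\<in>UNIV. g (u l) (u l))"
    by (simp add: Q_cols if_distrib[of "\<lambda>r. r * _"] sum.delta cong: if_cong)
  finally show ?thesis by simp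
qed

lemma orthonormal_system_parseval:
  fixes u y :: "'n::finite \<Rightarrow> 'a::real_vector"
  assumes ip: "is_inner_product ip" and u: "orthonormal_basis ip u" and y: "orthonormal_system ip y"
  shows "ip a b = (\<Sum>k\<in>UNIV. ip a (y k) * ip b (y k))"
proof -
  have "bilinear (\<lambda>x z. ip a x * ip b z)"
    using bilinear_mult_linear is_inner_product_linear(2)[OF ip] by blast
  from orthonormal_system_bilinear_trace_eq[OF ip u y this] show ?thesis
    using orthonormal_basis_parseval[OF ip u, of a b] by simp
qed

lemma orthonormal_system_is_basis:
  fixes u y :: "'n::finite \<Rightarrow> 'a::real_vector"
  assumes ip: "is_inner_product ip" and u: "orthonormal_basis ip u" and y: "orthonormal_system ip y"
  shows "orthonormal_basis ip y"
proof -
  have "x \<in> span (range y)" for x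
  proof -
    define r where "r = x - (\<Sum>k\<in>UNIV. ip x (y k) *\<^sub>R y k)"
    have "ip r (y m) = 0" for m
      using y by (simp add: r_def is_inner_product_simps[OF ip] orthonormal_system_def
          if_distrib[of "\<lambda>r. _ * r"] cong: if_cong)
    then have "ip r r = 0"
      using orthonormal_system_parseval[OF ip u y, of r r] by simp
    then have "x = (\<Sum>k\<in>UNIV. ip x (y k) *\<^sub>R y k)"
      by (simp add: is_inner_product_self_eq_0[OF ip] r_def)
    also have "\<dots> \<in> span (range y)"
      by (intro span_sum span_scale span_base) auto
    finally show ?thesis .
  qed
  then show ?thesis
    using y by (auto simp: orthonormal_basis_def orthonormal_system_def)
qed

lemma orthonormal_basis_trace:
  fixes u :: "'n::finite \<Rightarrow> real^'n"
  assumes ip: "is_inner_product ip" and u: "orthonormal_basis ip u" and M: "linear M"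
  shows "(\<Sum>l\<in>UNIV. ip (M (u l)) (u l)) = trace (matrix M)"
proof -
  have M_u: "M (u l) = (\<Sum>j\<in>UNIV. u l $ j *\<^sub>R M (axis j 1))" for l
    by (subst (1) basis_expansion[symmetric, of "u l"])
      (simp add: linear_sum[OF M] linear_scale[OF M] scalar_mult_eq_scaleR)
  have "(\<Sum>l\<in>UNIV. ip (M (u l)) (u l)) = (\<Sum>l\<in>UNIV. \<Sum>j\<in>UNIV. ip (M (axis j 1)) (u l) * u l $ j)"
    by (simp add: M_u is_inner_product_simps[OF ip] mult.commute)
  also have "\<dots> = (\<Sum>j\<in>UNIV. \<Sum>l\<in>UNIV. ip (M (axis j 1)) (u l) * u l $ j)"
    by (rule sum.swap)
  also have "\<dots> = (\<Sum>j\<in>UNIV. (\<Sum>l\<in>UNIV. ip (M (axis j 1)) (u l) *\<^sub>R u l) $ j)"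
    by (simp add: sum_component)
  also have "\<dots> = trace (matrix M)"
    by (simp add: trace_def matrix_def orthonormal_basis_expansion[OF ip u, symmetric])
  finally show ?thesis .
qed

section \<open>Ricci forms and nilsolitons\<close>

lemma ricci_form_change_basis:
  fixes u y :: "'n::finite \<Rightarrow> real^'n"
  assumes ip: "is_inner_product ip" and u: "orthonormal_basis ip u" and y: "orthonormal_basis ip y"
    and br: "bilinear br"
  shows "ricci_form br ip u X Y = ricci_form br ip y X Y"
proof -
  have y_sys: "orthonormal_system ip y"
    using y by (simp add: orthonormal_basis_def orthonormal_system_def)
  have br_lin: "linear (br a)" "linear (\<lambda>x. br x a)" for a
    using br by (simp_all add: bilinear_def)
  have lin_ip: "linear (\<lambda>x. ip (br a x) Z)" "linear (\<lambda>x. ip (br x a) Z)" for a Z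
    using linear_compose[OF br_lin(1) is_inner_product_linear(1)[OF ip]]
      linear_compose[OF br_lin(2) is_inner_product_linear(1)[OF ip]] by (simp_all add: o_def)
  have "bilinear (\<lambda>a b. ip (br X a) (br Y b))"
    using linear_compose[OF br_lin(1) is_inner_product_linear(1)[OF ip]]
      linear_compose[OF br_lin(1) is_inner_product_linear(2)[OF ip]]
    by (simp add: bilinear_def o_def)
  then have first: "(\<Sum>i\<in>UNIV. \<Sum>j\<in>UNIV. ip (br X (u i)) (u j) * ip (br Y (u i)) (u j))
      = (\<Sum>i\<in>UNIV. \<Sum>j\<in>UNIV. ip (br X (y i)) (y j) * ip (br Y (y i)) (y j))"
    using orthonormal_system_bilinear_trace_eq[OF ip u y_sys]
    by (simp add: orthonormal_basis_parseval[OF ip u, symmetric]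
        orthonormal_basis_parseval[OF ip y, symmetric])
  note trace_eq = orthonormal_system_bilinear_trace_eq[OF ip u y_sys]
  have "(\<Sum>i\<in>UNIV. \<Sum>j\<in>UNIV. ip (br (u i) (u j)) X * ip (br (u i) (u j)) Y)
      = (\<Sum>i\<in>UNIV. \<Sum>j\<in>UNIV. ip (br (u i) (y j)) X * ip (br (u i) (y j)) Y)"
    by (rule sum.cong[OF refl], rule trace_eq[OF bilinear_mult_linear[OF lin_ip(1) lin_ip(1)]])
  also have "\<dots> = (\<Sum>j\<in>UNIV. \<Sum>i\<in>UNIV. ip (br (u i) (y j)) X * ip (br (u i) (y j)) Y)"
    by (rule sum.swap)
  also have "\<dots> = (\<Sum>j\<in>UNIV. \<Sum>i\<in>UNIV. ip (br (y i) (y j)) X * ip (br (y i) (y j)) Y)"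
    by (rule sum.cong[OF refl], rule trace_eq[OF bilinear_mult_linear[OF lin_ip(2) lin_ip(2)]])
  also have "\<dots> = (\<Sum>i\<in>UNIV. \<Sum>j\<in>UNIV. ip (br (y i) (y j)) X * ip (br (y i) (y j)) Y)"
    by (rule sum.swap)
  finally show ?thesis
    by (simp only: ricci_form_def first)
qed

lemma ricci_form_trace:
  fixes u :: "'n::finite \<Rightarrow> real^'n"
  assumes ip: "is_inner_product ip" and u: "orthonormal_basis ip u" and A: "linear A"
  shows "(\<Sum>l\<in>UNIV. ricci_form br ip u (A (u l)) (u l)) =
     - (1/2) * (\<Sum>l\<in>UNIV. \<Sum>i\<in>UNIV. ip (br (A (u l)) (u i)) (br (u l) (u i)))
     + (1/4) * (\<Sum>i\<in>UNIV. \<Sum>j\<in>UNIV. ip (br (u i) (u j)) (A (br (u i) (u j))))"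
proof -
  have A_expand: "(\<Sum>l\<in>UNIV. ip w (A (u l)) * ip w (u l)) = ip w (A w)" for w
  proof -
    have "A w = (\<Sum>l\<in>UNIV. ip w (u l) *\<^sub>R A (u l))"
      by (subst (1) orthonormal_basis_expansion[OF ip u, of w])
        (simp add: linear_sum[OF A] linear_scale[OF A])
    then show ?thesis by (simp add: is_inner_product_simps[OF ip] mult.commute)
  qed
  have "(\<Sum>l\<in>UNIV. ricci_form br ip u (A (u l)) (u l)) =
     - (1/2) * (\<Sum>l\<in>UNIV. \<Sum>i\<in>UNIV. ip (br (A (u l)) (u i)) (br (u l) (u i)))
     + (1/4) * (\<Sum>l\<in>UNIV. \<Sum>i\<in>UNIV. \<Sum>j\<in>UNIV.
                  ip (br (u i) (u j)) (A (u l)) * ip (br (u i) (u j)) (u l))"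
    by (simp add: ricci_form_def orthonormal_basis_parseval[OF ip u, symmetric]
        sum.distrib sum_distrib_left)
  also have "(\<Sum>l\<in>UNIV. \<Sum>i\<in>UNIV. \<Sum>j\<in>UNIV. ip (br (u i) (u j)) (A (u l)) * ip (br (u i) (u j)) (u l))
      = (\<Sum>i\<in>UNIV. \<Sum>l\<in>UNIV. \<Sum>j\<in>UNIV. ip (br (u i) (u j)) (A (u l)) * ip (br (u i) (u j)) (u l))"
    by (rule sum.swap)
  also have "\<dots> = (\<Sum>i\<in>UNIV. \<Sum>j\<in>UNIV. \<Sum>l\<in>UNIV.
                       ip (br (u i) (u j)) (A (u l)) * ip (br (u i) (u j)) (u l))"
    by (rule sum.cong[OF refl], rule sum.swap)
  finally show ?thesis
    by (simp add: A_expand)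
qed

lemma ricci_form_trace_derivation:
  fixes u :: "'n::finite \<Rightarrow> real^'n"
  assumes ip: "is_inner_product ip" and u: "orthonormal_basis ip u"
    and anti: "\<And>x y. br x y = - br y x" and der: "is_derivation br A"
  shows "(\<Sum>l\<in>UNIV. ricci_form br ip u (A (u l)) (u l)) = 0"
proof -
  have A: "linear A" "A (br x y) = br (A x) y + br x (A y)" for x y
    using der by (simp_all add: is_derivation_def)
  define S where "S = (\<Sum>l\<in>UNIV. \<Sum>i\<in>UNIV. ip (br (A (u l)) (u i)) (br (u l) (u i)))"
  have left: "(\<Sum>i\<in>UNIV. \<Sum>j\<in>UNIV. ip (br (u i) (u j)) (br (A (u i)) (u j))) = S"
    unfolding S_def by (simp add: is_inner_product_sym[OF ip])
  have "ip (br (u i) (u j)) (br (u i) (A (u j))) = ip (br (A (u j)) (u i)) (br (u j) (u i))" for i j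
    using anti[of "u i" "u j"] anti[of "u i" "A (u j)"]
    by (simp add: is_inner_product_simps[OF ip] is_inner_product_sym[OF ip, of "br (u j) (u i)"])
  then have "(\<Sum>i\<in>UNIV. \<Sum>j\<in>UNIV. ip (br (u i) (u j)) (br (u i) (A (u j))))
      = (\<Sum>i\<in>UNIV. \<Sum>j\<in>UNIV. ip (br (A (u j)) (u i)) (br (u j) (u i)))"
    by simp
  also have "\<dots> = S" unfolding S_def by (rule sum.swap)
  finally have "(\<Sum>i\<in>UNIV. \<Sum>j\<in>UNIV. ip (br (u i) (u j)) (A (br (u i) (u j)))) = 2 * S"
    by (simp add: A(2) is_inner_product_simps[OF ip] sum.distrib left)
  then show ?thesis
    by (simp add: ricci_form_trace[OF ip u A(1)] S_def)
qed

lemma nilsoliton_ricci_form: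
  fixes br :: "real^'n::finite \<Rightarrow> real^'n \<Rightarrow> real^'n"
  assumes ip: "is_inner_product ip" and "is_nilsoliton br ip"
  obtains u D c where "orthonormal_basis ip u" "is_derivation br D"
    "\<And>X Y. ricci_form br ip u X Y = c * ip X Y + ip (D X) Y"
    "\<And>X Y. ip (D X) Y = ip X (D Y)"
proof -
  obtain u Ric c D where u: "orthonormal_basis ip u"
    and Ric: "\<And>X Y. ip (Ric X) Y = ricci_form br ip u X Y"
    and D: "is_derivation br D" and Ric_eq: "\<And>X. Ric X = c *\<^sub>R X + D X"
    using assms(2) unfolding is_nilsoliton_def by blast
  have ricci: "ricci_form br ip u X Y = c * ip X Y + ip (D X) Y" for X Y
    using Ric[of X Y] by (simp add: Ric_eq is_inner_product_simps[OF ip])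
  have "ricci_form br ip u X Y = ricci_form br ip u Y X" for X Y
    unfolding ricci_form_def by (simp add: mult.commute)
  then have ricci_sym: "c * ip X Y + ip (D X) Y = c * ip Y X + ip (D Y) X" for X Y
    by (simp add: ricci)
  have "ip (D X) Y = ip X (D Y)" for X Y
    using ricci_sym[of X Y] is_inner_product_sym[OF ip, of Y X]
      is_inner_product_sym[OF ip, of "D Y" X]
    by simp
  with u D ricci show thesis by (rule that)
qed

lemma nilsoliton_ricci_trace:
  fixes u :: "'n::finite \<Rightarrow> real^'n"
  assumes ip: "is_inner_product ip" and u: "orthonormal_basis ip u" and "linear D" "linear A"
    and ricci: "\<And>X Y. ricci_form br ip u X Y = c * ip X Y + ip (D X) Y"
  shows "(\<Sum>l\<in>UNIV. ricci_form br ip u (A (u l)) (u l))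
    = c * trace (matrix A) + trace (matrix (D \<circ> A))"
  using orthonormal_basis_trace[OF ip u \<open>linear A\<close>]
    orthonormal_basis_trace[OF ip u linear_compose[OF \<open>linear A\<close> \<open>linear D\<close>]]
  by (simp add: ricci sum.distrib sum_distrib_left[symmetric])

lemma nilsoliton_trace_derivation:
  fixes u :: "'n::finite \<Rightarrow> real^'n"
  assumes ip: "is_inner_product ip" and u: "orthonormal_basis ip u" and "linear D"
    and ricci: "\<And>X Y. ricci_form br ip u X Y = c * ip X Y + ip (D X) Y"
    and anti: "\<And>x y. br x y = - br y x" and der: "is_derivation br A"
  shows "c * trace (matrix A) + trace (matrix (D \<circ> A)) = 0"
  using der ricci_form_trace_derivation[OF ip u anti der]
  by (simp add: nilsoliton_ricci_trace[OF ip u \<open>linear D\<close> _ ricci] is_derivation_def)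

lemma nilsoliton_scalar_curvature_neg:
  fixes u :: "'n::finite \<Rightarrow> real^'n"
  assumes ip: "is_inner_product ip" and u: "orthonormal_basis ip u" and "linear D"
    and ricci: "\<And>X Y. ricci_form br ip u X Y = c * ip X Y + ip (D X) Y"
    and br: "bilinear br" and nonabelian: "br x y \<noteq> 0"
  shows "c * CARD('n) + trace (matrix D) < 0"
proof -
  define S where "S = (\<Sum>l\<in>UNIV. \<Sum>i\<in>UNIV. ip (br (u l) (u i)) (br (u l) (u i)))"
  have "c * CARD('n) + trace (matrix D) = - (1/4) * S"
    using ricci_form_trace[OF ip u linear_id, of br]
      nilsoliton_ricci_trace[OF ip u \<open>linear D\<close> linear_id ricci]
    by (simp add: S_def matrix_id_mat_1 trace_I)
  moreover have "S \<ge> 0"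
    unfolding S_def by (intro sum_nonneg is_inner_product_self_nonneg[OF ip])
  moreover have "S \<noteq> 0"
  proof
    assume "S = 0"
    then have "br (u l) (u i) = 0" for l i
      using is_inner_product_self_nonneg[OF ip] is_inner_product_self_eq_0[OF ip]
      unfolding S_def by (simp add: sum_nonneg_eq_0_iff sum_nonneg)
    then have "br x y = 0"
      by (subst orthonormal_basis_expansion[OF ip u, of x],
          subst orthonormal_basis_expansion[OF ip u, of y])
        (simp add: bilinear_sum br bilinear_lmul bilinear_rmul)
    with nonabelian show False ..
  qed
  ultimately show ?thesis by simp
qed

lemma nilsoliton_ricci_eigenbasis_diagonal:
  fixes u y :: "'n::finite \<Rightarrow> real^'n"
  assumes ip: "is_inner_product ip" and u: "orthonormal_basis ip u" and y: "orthonormal_basis ip y"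
    and br: "bilinear br" and ricci: "\<And>X Y. ricci_form br ip u X Y = c * ip X Y + ip (D X) Y"
    and eig: "D (y l) = a *\<^sub>R y l"
  shows "- (1/2) * (\<Sum>i\<in>UNIV. \<Sum>j\<in>UNIV. (ip (br (y l) (y i)) (y j))\<^sup>2)
    + (1/4) * (\<Sum>i\<in>UNIV. \<Sum>j\<in>UNIV. (ip (br (y i) (y j)) (y l))\<^sup>2) = c + a"
proof -
  have "ip (y l) (y l) = 1" using y by (simp add: orthonormal_basis_def)
  have "ricci_form br ip y (y l) (y l) = ricci_form br ip u (y l) (y l)"
    by (rule ricci_form_change_basis[OF ip u y br, symmetric])
  also have "\<dots> = c + a"
    using \<open>ip (y l) (y l) = 1\<close> by (simp add: ricci eig is_inner_product_simps[OF ip])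
  finally show ?thesis by (simp add: ricci_form_def power2_eq_square)
qed

lemma derivation_bracket_eigenvector:
  assumes "is_derivation br D" and "bilinear br" and "D v = a *\<^sub>R v" and "D w = b *\<^sub>R w"
  shows "D (br v w) = (a + b) *\<^sub>R br v w"
  using assms by (simp add: is_derivation_def bilinear_lmul bilinear_rmul scaleR_add_left)

lemma derivation_structure_constants_graded:
  assumes ip: "is_inner_product ip" and D_sym: "\<And>x z. ip (D x) z = ip x (D z)"
    and "is_derivation br D" and "bilinear br" and "t \<noteq> 0"
    and eig: "\<And>k. D (y k) = (deg k * t) *\<^sub>R y k" and "deg k \<noteq> deg i + deg j"
  shows "ip (br (y i) (y j)) (y k) = 0"
proof (rule symmetric_eigenvectors_orthogonal[OF ip D_sym,
      of _ "(deg i + deg j) * t" _ "deg k * t"])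
  show "D (br (y i) (y j)) = ((deg i + deg j) * t) *\<^sub>R br (y i) (y j)"
    using derivation_bracket_eigenvector[OF assms(3,4) eig eig] by (simp add: algebra_simps)
  show "(deg i + deg j) * t \<noteq> deg k * t" using assms(5,7) by simp
  show "D (y k) = (deg k * t) *\<^sub>R y k" by (rule eig)
qed

lemma weighted_ricci_sum:
  fixes C :: "'n::finite \<Rightarrow> 'n \<Rightarrow> 'n \<Rightarrow> real" and w :: "'n \<Rightarrow> real"
  assumes anti: "\<And>i j k. C j i k = - C i j k"
  shows "(\<Sum>l\<in>UNIV. w l * (- (1/2) * (\<Sum>i\<in>UNIV. \<Sum>j\<in>UNIV. (C l i j)\<^sup>2)
                             + (1/4) * (\<Sum>i\<in>UNIV. \<Sum>j\<in>UNIV. (C i j l)\<^sup>2)))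
       = (1/4) * (\<Sum>i\<in>UNIV. \<Sum>j\<in>UNIV. \<Sum>k\<in>UNIV. (w k - w i - w j) * (C i j k)\<^sup>2)"
proof -
  have sq: "(C j i k)\<^sup>2 = (C i j k)\<^sup>2" for i j k
    using anti[of i j k] by simp
  define X where "X = (\<Sum>i\<in>UNIV. \<Sum>j\<in>UNIV. \<Sum>k\<in>UNIV. w i * (C i j k)\<^sup>2)"
  have "(\<Sum>i\<in>UNIV. \<Sum>j\<in>UNIV. \<Sum>k\<in>UNIV. w j * (C i j k)\<^sup>2)
      = (\<Sum>j\<in>UNIV. \<Sum>i\<in>UNIV. \<Sum>k\<in>UNIV. w j * (C j i k)\<^sup>2)"
    using sq by (subst sum.swap) simp
  also have "\<dots> = X" by (simp add: X_def)
  finally have Xj: "(\<Sum>i\<in>UNIV. \<Sum>j\<in>UNIV. \<Sum>k\<in>UNIV. w j * (C i j k)\<^sup>2) = X" .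
  have "(\<Sum>l\<in>UNIV. w l * (\<Sum>i\<in>UNIV. \<Sum>j\<in>UNIV. (C i j l)\<^sup>2))
      = (\<Sum>l\<in>UNIV. \<Sum>i\<in>UNIV. \<Sum>j\<in>UNIV. w l * (C i j l)\<^sup>2)"
    by (simp add: sum_distrib_left)
  also have "\<dots> = (\<Sum>i\<in>UNIV. \<Sum>l\<in>UNIV. \<Sum>j\<in>UNIV. w l * (C i j l)\<^sup>2)"
    by (rule sum.swap)
  also have "\<dots> = (\<Sum>i\<in>UNIV. \<Sum>j\<in>UNIV. \<Sum>k\<in>UNIV. w k * (C i j k)\<^sup>2)"
    by (rule sum.cong[OF refl], rule sum.swap)
  finally have Xk: "(\<Sum>l\<in>UNIV. w l * (\<Sum>i\<in>UNIV. \<Sum>j\<in>UNIV. (C i j l)\<^sup>2))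
      = (\<Sum>i\<in>UNIV. \<Sum>j\<in>UNIV. \<Sum>k\<in>UNIV. w k * (C i j k)\<^sup>2)" .
  have "(\<Sum>i\<in>UNIV. \<Sum>j\<in>UNIV. \<Sum>k\<in>UNIV. (w k - w i - w j) * (C i j k)\<^sup>2)
      = (\<Sum>i\<in>UNIV. \<Sum>j\<in>UNIV. \<Sum>k\<in>UNIV. w k * (C i j k)\<^sup>2) - X
        - (\<Sum>i\<in>UNIV. \<Sum>j\<in>UNIV. \<Sum>k\<in>UNIV. w j * (C i j k)\<^sup>2)"
    by (simp add: X_def left_diff_distrib sum_subtractf)
  moreover have "(\<Sum>l\<in>UNIV. w l * (\<Sum>i\<in>UNIV. \<Sum>j\<in>UNIV. (C l i j)\<^sup>2)) = X"
    by (simp add: X_def sum_distrib_left)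
  moreover have "(\<Sum>l\<in>UNIV. w l * (- (1/2) * (\<Sum>i\<in>UNIV. \<Sum>j\<in>UNIV. (C l i j)\<^sup>2)
                             + (1/4) * (\<Sum>i\<in>UNIV. \<Sum>j\<in>UNIV. (C i j l)\<^sup>2)))
      = - (1/2) * (\<Sum>l\<in>UNIV. w l * (\<Sum>i\<in>UNIV. \<Sum>j\<in>UNIV. (C l i j)\<^sup>2))
        + (1/4) * (\<Sum>l\<in>UNIV. w l * (\<Sum>i\<in>UNIV. \<Sum>j\<in>UNIV. (C i j l)\<^sup>2))"
    by (simp only: distrib_left sum.distrib mult.left_commute[of "w _"] sum_distrib_left[symmetric])
  ultimately show ?thesis
    using Xj Xk by simp

qed

section \<open>Operators triangular with respect to a grading\<close>

definition grading_map :: "('n::finite \<Rightarrow> real) \<Rightarrow> real^'n \<Rightarrow> real^'n" where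
  "grading_map deg x = (\<chi> i. deg i * x $ i)"

definition grading_triangular :: "('n::finite \<Rightarrow> real) \<Rightarrow> real \<Rightarrow> (real^'n \<Rightarrow> real^'n) \<Rightarrow> bool" where
  "grading_triangular deg t D \<longleftrightarrow> linear D \<and> (\<forall>j. D (axis j 1) $ j = deg j * t)
     \<and> (\<forall>i j. i \<noteq> j \<and> deg i \<le> deg j \<longrightarrow> D (axis j 1) $ i = 0)"

lemma grading_triangularD:
  assumes "grading_triangular deg t D"
  shows "linear D" "D (axis j 1) $ j = deg j * t" "i \<noteq> j \<Longrightarrow> deg i \<le> deg j \<Longrightarrow> D (axis j 1) $ i = 0"
  using assms by (auto simp: grading_triangular_def)

lemma linear_grading_map: "linear (grading_map deg)"
  by (rule linearI) (simp_all add: grading_map_def vec_eq_iff algebra_simps)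

lemma linear_component_expansion:
  fixes D :: "real^'n::finite \<Rightarrow> real^'m::finite"
  assumes "linear D"
  shows "D x $ i = (\<Sum>j\<in>UNIV. D (axis j 1) $ i * x $ j)"
proof -
  have "D x = (\<Sum>j\<in>UNIV. x $ j *\<^sub>R D (axis j 1))"
    by (subst (1) basis_expansion[symmetric, of x])
      (simp add: linear_sum[OF assms] linear_scale[OF assms] scalar_mult_eq_scaleR)
  then show ?thesis by (simp add: sum_component mult.commute)
qed

lemma exists_lowest_component:
  fixes x :: "real^'n::finite" and deg :: "'n \<Rightarrow> 'a::linorder"
  assumes "x \<noteq> 0"
  obtains j0 where "x $ j0 \<noteq> 0" "\<And>j. x $ j \<noteq> 0 \<Longrightarrow> deg j0 \<le> deg j"
proof -
  have "{j. x $ j \<noteq> 0} \<noteq> {}" using assms by (auto simp: vec_eq_iff)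
  then obtain j0 where "is_arg_min deg (\<lambda>j. j \<in> {j. x $ j \<noteq> 0}) j0"
    using ex_is_arg_min_if_finite[of "{j. x $ j \<noteq> 0}" deg] by auto
  then show thesis by (intro that) (auto simp: is_arg_min_linorder)
qed

lemma grading_triangular_lowest_component:
  assumes D: "grading_triangular deg t D" and low: "\<And>j. x $ j \<noteq> 0 \<Longrightarrow> deg j0 \<le> deg j"
  shows "D x $ j0 = deg j0 * t * x $ j0"
proof -
  have "D (axis j 1) $ j0 * x $ j = (if j = j0 then deg j0 * t * x $ j0 else 0)" for j
    using D low[of j] by (auto simp: grading_triangular_def)
  moreover have "linear D" using D by (simp add: grading_triangular_def)
  ultimately show ?thesis
    by (simp add: linear_component_expansion[of D x j0])
qed

lemma grading_triangular_eigenvector_lowest: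
  assumes D: "grading_triangular deg t D" and "t \<noteq> 0"
    and eig: "D x = (m * t) *\<^sub>R x" and "x \<noteq> 0"
  obtains j0 where "x $ j0 \<noteq> 0" "deg j0 = m" "\<And>j. x $ j \<noteq> 0 \<Longrightarrow> m \<le> deg j"
proof -
  obtain j0 where j0: "x $ j0 \<noteq> 0" and low: "\<And>j. x $ j \<noteq> 0 \<Longrightarrow> deg j0 \<le> deg j"
    using exists_lowest_component[OF \<open>x \<noteq> 0\<close>] by metis
  have "m * t * x $ j0 = deg j0 * t * x $ j0"
    using grading_triangular_lowest_component[OF D, of x j0, OF low] by (simp add: eig)
  then have "deg j0 = m" using j0 \<open>t \<noteq> 0\<close> by simp
  with j0 low show thesis by (intro that) auto
qed

lemma grading_triangular_eigenvector_low_component: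
  assumes D: "grading_triangular deg t D" and "t \<noteq> 0" and "D x = (m * t) *\<^sub>R x" and "deg j < m"
  shows "x $ j = 0"
proof (rule ccontr)
  assume "x $ j \<noteq> 0"
  then have "x \<noteq> 0" by auto
  then obtain j0 where "\<And>j. x $ j \<noteq> 0 \<Longrightarrow> m \<le> deg j"
    using grading_triangular_eigenvector_lowest[OF D \<open>t \<noteq> 0\<close> \<open>D x = _\<close>] by metis
  with \<open>x $ j \<noteq> 0\<close> \<open>deg j < m\<close> show False by fastforce
qed

lemma grading_triangular_eigenvector_eq_0:
  assumes D: "grading_triangular deg t D" and "t \<noteq> 0" and "D x = (m * t) *\<^sub>R x"
    and "\<And>j. deg j = m \<Longrightarrow> x $ j = 0"
  shows "x = 0"
  using grading_triangular_eigenvector_lowest[OF D \<open>t \<noteq> 0\<close> \<open>D x = _\<close>] assms(4) by metis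

lemma linear_inj_on_subspace_image_eq:
  fixes A :: "'a::euclidean_space \<Rightarrow> 'a"
  assumes "linear A" "subspace W" "A ` W \<subseteq> W" "inj_on A W"
  shows "A ` W = W"
  using subspace_dim_equal[OF linear_subspace_image[OF assms(1,2)] assms(2,3)]
    dim_image_eq[OF assms(1), of W] assms(4)
  by (simp add: span_eq_iff[THEN iffD2, OF assms(2)])

lemma grading_triangular_high_degrees:
  assumes D: "grading_triangular deg t D" and x: "\<And>j. deg j \<le> m \<Longrightarrow> x $ j = 0" and "deg i \<le> m"
  shows "D x $ i = 0"
proof -
  have "D (axis j 1) $ i * x $ j = 0" for j
  proof (cases "x $ j = 0")
    case False
    then have "deg i < deg j" using x \<open>deg i \<le> m\<close> by (meson le_less_trans not_le)
    then show ?thesis using grading_triangularD(3)[OF D, of i j] by auto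
  qed simp
  then show ?thesis
    unfolding linear_component_expansion[OF grading_triangularD(1)[OF D], of x i]
    by (simp add: sum.neutral)
qed

lemma grading_triangular_eigenvector_exists:
  fixes D :: "real^'n::finite \<Rightarrow> real^'n"
  assumes D: "grading_triangular deg t D" and "t \<noteq> 0"
  obtains f where "D f = (deg k * t) *\<^sub>R f" "f $ k = 1"
    "\<And>j. j \<noteq> k \<Longrightarrow> deg j \<le> deg k \<Longrightarrow> f $ j = 0"
proof -
  txt \<open>\<open>D - deg k t\<close> is injective, hence bijective, on the space \<open>W\<close> of vectors
    supported in degrees above \<open>deg k\<close>.\<close>
  define A where "A x = D x - (deg k * t) *\<^sub>R x" for x
  define W :: "(real^'n) set" where "W = {x. \<forall>j. deg j \<le> deg k \<longrightarrow> x $ j = 0}"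
  have lin_D: "linear D" using D by (simp add: grading_triangular_def)
  have lin: "linear A"
    by (rule linearI)
      (simp_all add: A_def linear_add[OF lin_D] linear_scale[OF lin_D] algebra_simps)
  have W: "subspace W"
    by (auto simp: subspace_def W_def)
  have AW: "A ` W \<subseteq> W"
  proof clarify
    fix x assume "x \<in> W"
    then have "D x $ i = 0" if "deg i \<le> deg k" for i
      using that by (intro grading_triangular_high_degrees[OF D, of "deg k"]) (auto simp: W_def)
    with \<open>x \<in> W\<close> show "A x \<in> W" by (simp add: A_def W_def)
  qed
  have "inj_on A W"
  proof (rule linear_inj_on_iff_eq_0[OF lin W, THEN iffD2], intro ballI impI)
    fix x assume "x \<in> W" "A x = 0"
    then show "x = 0"
      by (intro grading_triangular_eigenvector_eq_0[OF D \<open>t \<noteq> 0\<close>, of x "deg k"])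
        (auto simp: A_def W_def)
  qed
  then have "A ` W = W"
    by (rule linear_inj_on_subspace_image_eq[OF lin W AW])
  moreover have "- A (axis k 1) \<in> W"
    using grading_triangularD[OF D] by (auto simp: W_def A_def axis_def)
  ultimately obtain x where x: "x \<in> W" "A x = - A (axis k 1)" by (metis imageE)
  show thesis
  proof
    have "A (axis k 1 + x) = 0" using x linear_add[OF lin] by simp
    then show "D (axis k 1 + x) = (deg k * t) *\<^sub>R (axis k 1 + x)" by (simp add: A_def)
    show "(axis k 1 + x) $ k = 1" using x by (simp add: W_def)
    show "(axis k 1 + x) $ j = 0" if "j \<noteq> k" "deg j \<le> deg k" for j
      using x that by (simp add: W_def axis_def)
  qed
qed

lemma grading_triangular_trace:
  assumes D: "grading_triangular deg t D"
  shows "trace (matrix D) = t * (\<Sum>j\<in>UNIV. deg j)"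
    "trace (matrix (D \<circ> grading_map deg)) = t * (\<Sum>j\<in>UNIV. deg j ^ 2)"
proof -
  have "grading_map deg (axis j 1) = deg j *\<^sub>R axis j 1" for j
    by (simp add: grading_map_def axis_def vec_eq_iff)
  then have "(D \<circ> grading_map deg) (axis j 1) = deg j *\<^sub>R D (axis j 1)" for j
    by (simp add: linear_scale[OF grading_triangularD(1)[OF D]])
  then show "trace (matrix D) = t * (\<Sum>j\<in>UNIV. deg j)"
    "trace (matrix (D \<circ> grading_map deg)) = t * (\<Sum>j\<in>UNIV. deg j ^ 2)"
    by (simp_all add: trace_def matrix_def grading_triangularD(2)[OF D] sum_distrib_left
        power2_eq_square mult.commute mult.left_commute)
qed

lemma trace_grading_map: "trace (matrix (grading_map deg)) = (\<Sum>j\<in>UNIV. deg j)"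
  by (simp add: trace_def matrix_def grading_map_def axis_def)

section \<open>The algebra and its derivations\<close>

lemma UNIV_7: "(UNIV :: 7 set) = {1, 2, 3, 4, 5, 6, 7}"
proof -
  have "x \<in> {1, 2, 3, 4, 5, 6, 7}" for x :: 7
  proof (induct x)
    case (of_int z)
    then have "z \<in> {0, 1, 2, 3, 4, 5, 6}" by auto
    then show ?case by auto
  qed
  then show ?thesis by blast
qed

lemma sum_UNIV_7:
  fixes f :: "7 \<Rightarrow> 'a::comm_monoid_add"
  shows "(\<Sum>k\<in>UNIV. f k) = f 1 + f 2 + f 3 + f 4 + f 5 + f 6 + f 7"
  unfolding UNIV_7 by (subst sum.insert, simp, simp)+ (simp add: add.assoc)

lemma all_7: "(\<forall>k::7. P k) \<longleftrightarrow> P 1 \<and> P 2 \<and> P 3 \<and> P 4 \<and> P 5 \<and> P 6 \<and> P 7"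
  by (metis UNIV_7 UNIV_I empty_iff insert_iff)

definition degN :: "7 \<Rightarrow> real" where
  "degN k = (if k = 1 then 1 else if k = 2 \<or> k = 3 then 2 else if k = 4 \<or> k = 5 then 3
             else if k = 6 then 4 else 5)"

lemma degN_eq_5_iff: "degN k = 5 \<longleftrightarrow> k = 7"
proof -
  have "\<forall>k. degN k = 5 \<longleftrightarrow> k = 7" unfolding all_7 by (simp add: degN_def)
  then show ?thesis by blast
qed

lemma degN_eq_cases: "i \<noteq> j \<Longrightarrow> degN i = degN j \<Longrightarrow> {i, j} = {2, 3} \<or> {i, j} = {4, 5}"
proof -
  have "\<forall>i j. i \<noteq> j \<and> degN i = degN j \<longrightarrow> {i, j} = {2, 3} \<or> {i, j} = {4, 5 :: 7}"
    unfolding all_7 by (simp add: degN_def doubleton_eq_iff)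
  then show "i \<noteq> j \<Longrightarrow> degN i = degN j \<Longrightarrow> {i, j} = {2, 3} \<or> {i, j} = {4, 5}" by blast
qed

lemma brN_component:
  "brN x y $ i =
   (if i = 4 then x$1 * y$2 - x$2 * y$1
    else if i = 6 then (x$1 * y$4 - x$4 * y$1) + (x$2 * y$3 - x$3 * y$2)
    else if i = 7 then (x$1 * y$6 - x$6 * y$1) + (x$2 * y$4 - x$4 * y$2)
      - (x$3 * y$4 - x$4 * y$3) - (x$3 * y$5 - x$5 * y$3)
    else 0)"
  by (simp add: brN_def ee_def axis_def)

lemma brN_component_7_degree_2_3:
  "v $ 1 = 0 \<Longrightarrow> w $ 1 = 0 \<Longrightarrow> w $ 2 = 0 \<Longrightarrow> w $ 3 = 0 \<Longrightarrow>
    brN v w $ 7 = (v $ 2 - v $ 3) * w $ 4 - v $ 3 * w $ 5"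
  by (simp add: brN_component algebra_simps)

lemma brN_antisym: "brN x y = - brN y x"
  by (simp add: vec_eq_iff brN_component algebra_simps)

lemma bilinear_brN: "bilinear brN"
  unfolding bilinear_def
  by (auto intro!: linearI simp: vec_eq_iff brN_component algebra_simps)

lemma brN_nonzero: "brN (ee 1) (ee 2) \<noteq> 0"
proof
  assume "brN (ee 1) (ee 2) = 0"
  then have "brN (ee 1) (ee 2) $ 4 = 0" by simp
  then show False by (simp add: brN_component ee_def axis_def)
qed

lemma derivation_grading_map_degN: "is_derivation brN (grading_map degN)"
  by (simp add: is_derivation_def linear_grading_map grading_map_def vec_eq_iff brN_component
      degN_def algebra_simps)

lemma derivation_brN_grading_triangular:
  assumes der: "is_derivation brN D"
  shows "grading_triangular degN (D (ee 1) $ 1) D"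
proof -
  define d where "d i j = D (ee j) $ i" for i j
  have lin: "linear D" using der by (simp add: is_derivation_def)
  have D_comp: "D x $ i = (\<Sum>j\<in>UNIV. d i j * x $ j)" for x i
    unfolding d_def ee_def by (rule linear_component_expansion[OF lin])
  have der_eq: "D (brN (ee a) (ee b)) $ i = brN (D (ee a)) (ee b) $ i + brN (ee a) (D (ee b)) $ i"
    for a b i using der by (simp add: is_derivation_def)
  txt \<open>The Leibniz rule on these basis triples already determines the relevant entries.\<close>
  note eqs = der_eq[of 1 2 4] der_eq[of 1 4 6] der_eq[of 1 6 7] der_eq[of 2 3 6] der_eq[of 2 4 7]
    der_eq[of 2 5 7] der_eq[of 3 5 7] der_eq[of 1 5 6] der_eq[of 2 4 6] der_eq[of 1 2 3]
    der_eq[of 1 6 6] der_eq[of 1 4 4] der_eq[of 1 2 2] der_eq[of 2 3 4] der_eq[of 1 2 1]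
    der_eq[of 2 5 4] der_eq[of 1 4 1] der_eq[of 1 6 1] der_eq[of 1 3 4] der_eq[of 1 5 4]
    der_eq[of 1 4 2] der_eq[of 1 6 2] der_eq[of 2 5 6] der_eq[of 1 4 3] der_eq[of 1 6 3]
    der_eq[of 1 6 4] der_eq[of 1 2 5] der_eq[of 1 4 5] der_eq[of 1 6 5]
  have "D (axis j 1) $ i = d i j" for i j by (simp add: d_def ee_def)
  with lin show ?thesis
    unfolding grading_triangular_def all_7 degN_def
    using eqs by (simp add: D_comp sum_UNIV_7 brN_component ee_def axis_def)
qed

lemma brN_degree_1_2_bracket:
  assumes der: "is_derivation brN D" and D: "grading_triangular degN t D" and "t \<noteq> 0"
    and v: "D v = (1 * t) *\<^sub>R v" and w: "D w = (2 * t) *\<^sub>R w" and "w $ 2 = 0"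
  shows "brN v w = 0"
proof (rule grading_triangular_eigenvector_eq_0[OF D \<open>t \<noteq> 0\<close>])
  show "D (brN v w) = (3 * t) *\<^sub>R brN v w"
    using derivation_bracket_eigenvector[OF der bilinear_brN v w] by simp
  have "w $ 1 = 0"
    by (rule grading_triangular_eigenvector_low_component[OF D \<open>t \<noteq> 0\<close> w]) (simp add: degN_def)
  with \<open>w $ 2 = 0\<close> show "brN v w $ j = 0" if "degN j = 3" for j
    using that by (auto simp: brN_component degN_def split: if_splits)
qed

lemma brN_degree_2_3_pairing_nondegenerate:
  assumes D: "grading_triangular degN t D" and "t \<noteq> 0" and v: "D v = (degN 2 * t) *\<^sub>R v"
    and w: "\<And>m. m \<in> {4, 5} \<Longrightarrow> D (w m) = (degN m * t) *\<^sub>R w m"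
    and w_coords: "w 4 $ 5 = 0" "w 4 $ 4 \<noteq> 0" "w 5 $ 5 \<noteq> 0"
    and bracket_0: "\<And>m. m \<in> {4, 5} \<Longrightarrow> brN v (w m) = 0"
  shows "v $ 2 = 0"
proof -
  have v_low: "v $ 1 = 0"
    by (rule grading_triangular_eigenvector_low_component[OF D \<open>t \<noteq> 0\<close> v]) (simp add: degN_def)
  have w_low: "w m $ j = 0" if "m \<in> {4, 5}" "j \<in> {1, 2, 3}" for m j
  proof (rule grading_triangular_eigenvector_low_component[OF D \<open>t \<noteq> 0\<close> w[OF that(1)]])
    show "degN j < degN m" using that by (elim insertE emptyE; simp add: degN_def)
  qed
  have bracket_7: "(v $ 2 - v $ 3) * w m $ 4 - v $ 3 * w m $ 5 = 0" if "m \<in> {4, 5}" for m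
    using brN_component_7_degree_2_3[OF v_low w_low[OF that] w_low[OF that] w_low[OF that]]
      bracket_0[OF that] by simp
  have "v $ 2 = v $ 3"
    using bracket_7[of 4] w_coords(1,2) by simp
  moreover from this have "v $ 3 = 0"
    using bracket_7[of 5] w_coords(3) by simp
  ultimately show ?thesis by simp
qed

lemma brN_nilsoliton_derivation_positive:
  fixes u :: "7 \<Rightarrow> real^7"
  assumes ip: "is_inner_product ip" and u: "orthonormal_basis ip u"
    and ricci: "\<And>X Y. ricci_form brN ip u X Y = c * ip X Y + ip (D X) Y"
    and D: "grading_triangular degN t D"
  shows "t > 0"
proof -
  note lin = grading_triangularD(1)[OF D]
  have "20 * c + 68 * t = 0"
    using nilsoliton_trace_derivation[OF ip u lin ricci brN_antisym derivation_grading_map_degN]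
    by (simp add: trace_grading_map grading_triangular_trace[OF D] sum_UNIV_7 degN_def)
  moreover have "7 * c + 20 * t < 0"
    using nilsoliton_scalar_curvature_neg[OF ip u lin ricci bilinear_brN brN_nonzero]
    by (simp add: grading_triangular_trace[OF D] sum_UNIV_7 degN_def)
  ultimately show ?thesis by linarith
qed

lemma degN_adapted_eigenbasis:
  assumes ip: "is_inner_product ip" and D_sym: "\<And>x z. ip (D x) z = ip x (D z)"
    and D: "grading_triangular degN t D" and "t \<noteq> 0"
  obtains y where "orthonormal_system ip y" "\<And>k. D (y k) = (degN k * t) *\<^sub>R y k"
    "y 3 $ 2 = 0" "y 2 $ 2 \<noteq> 0" "y 4 $ 5 = 0" "y 4 $ 4 \<noteq> 0" "y 5 $ 5 \<noteq> 0"
proof -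
  have "\<forall>k. \<exists>f. D f = (degN k * t) *\<^sub>R f \<and> f $ k = 1 \<and> (\<forall>j. j \<noteq> k \<and> degN j \<le> degN k \<longrightarrow> f $ j = 0)"
    using grading_triangular_eigenvector_exists[OF D \<open>t \<noteq> 0\<close>] by metis
  then obtain f where f_eig: "\<And>k. D (f k) = (degN k * t) *\<^sub>R f k" and f_kk: "\<And>k. f k $ k = 1"
    and f_low: "\<And>k j. j \<noteq> k \<Longrightarrow> degN j \<le> degN k \<Longrightarrow> f k $ j = 0"
    by metis
  define z where "z k = (if k = 2 then f 2 - (ip (f 2) (f 3) / ip (f 3) (f 3)) *\<^sub>R f 3
    else if k = 5 then f 5 - (ip (f 5) (f 4) / ip (f 4) (f 4)) *\<^sub>R f 4 else f k)" for k
  have lin: "linear D" using D by (simp add: grading_triangular_def)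
  have z_eig: "D (z k) = (degN k * t) *\<^sub>R z k" for k
    using f_eig by (simp add: z_def linear_diff[OF lin] linear_scale[OF lin] degN_def algebra_simps)
  have f_32: "f 3 $ 2 = 0" and f_45: "f 4 $ 5 = 0" by (simp_all add: f_low degN_def)
  have z_kk: "z k $ k = 1" for k by (simp add: z_def f_kk f_32 f_45)
  then have z_nz: "z k \<noteq> 0" for k by (metis zero_index zero_neq_one)
  have z_orth: "ip (z i) (z j) = 0" if "i \<noteq> j" for i j
  proof (cases "degN i = degN j")
    case False
    then show ?thesis
      using symmetric_eigenvectors_orthogonal[OF ip D_sym z_eig z_eig] \<open>t \<noteq> 0\<close> by simp
  next
    case True
    with \<open>i \<noteq> j\<close> have "{i, j} = {2, 3} \<or> {i, j} = {4, 5}" by (rule degN_eq_cases)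
    moreover have "ip (z 2) (z 3) = 0" "ip (z 5) (z 4) = 0"
      using gram_schmidt_orthogonal[OF ip z_nz[of 3], of "f 2"]
        gram_schmidt_orthogonal[OF ip z_nz[of 4], of "f 5"]
      by (simp_all add: z_def)
    ultimately show ?thesis
      using is_inner_product_sym[OF ip, of "z 2" "z 3"] is_inner_product_sym[OF ip, of "z 5" "z 4"]
      by (auto simp: doubleton_eq_iff)
  qed
  show thesis
  proof
    show "orthonormal_system ip (\<lambda>k. normalized ip (z k))"
      using z_orth normalized_unit[OF ip z_nz]
      by (auto simp: orthonormal_system_def normalized_def is_inner_product_simps[OF ip])
    show "D (normalized ip (z k)) = (degN k * t) *\<^sub>R normalized ip (z k)" for k
      by (simp add: normalized_def linear_scale[OF lin] z_eig)
    show "normalized ip (z 3) $ 2 = 0" "normalized ip (z 2) $ 2 \<noteq> 0" "normalized ip (z 4) $ 5 = 0"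
      "normalized ip (z 4) $ 4 \<noteq> 0" "normalized ip (z 5) $ 5 \<noteq> 0"
      by (simp_all add: normalized_component_eq_0[OF ip z_nz] z_kk) (simp_all add: z_def f_32 f_45)
  qed
qed

text \<open>\<open>wN\<close> is orthogonal to \<open>(1, \<dots>, 1)\<close> and to \<open>degN\<close>, and \<open>wN k - wN i - wN j\<close> is
  nonnegative on every triple of degrees admitted by the bracket except \<open>{i, j} = {1, 3}\<close>,
  where the adapted basis has vanishing bracket; it equals 4 for \<open>(2, 4, 7)\<close> and \<open>(2, 5, 7)\<close>.\<close>

definition wN :: "7 \<Rightarrow> real" where
  "wN k = (if k = 1 then 1 else if k = 2 then -2 else if k = 3 then 2
           else if k = 4 \<or> k = 5 then -1 else if k = 6 then 0 else 1)"

lemma wN_admissible: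
  "degN k = degN i + degN j \<Longrightarrow> i \<noteq> j \<Longrightarrow> {i, j} \<noteq> {1, 3} \<Longrightarrow> wN k - wN i - wN j \<ge> 0"
proof -
  have "\<forall>i j k. degN k = degN i + degN j \<longrightarrow> i \<noteq> j \<longrightarrow> {i, j} \<noteq> {1, 3} \<longrightarrow> wN k - wN i - wN j \<ge> 0"
    unfolding all_7 by (simp add: degN_def wN_def doubleton_eq_iff)
  then show "degN k = degN i + degN j \<Longrightarrow> i \<noteq> j \<Longrightarrow> {i, j} \<noteq> {1, 3} \<Longrightarrow> wN k - wN i - wN j \<ge> 0"
    by blast
qed

lemma degN_weighted_obstruction:
  fixes C :: "7 \<Rightarrow> 7 \<Rightarrow> 7 \<Rightarrow> real"
  assumes anti: "\<And>i j k. C j i k = - C i j k"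
    and graded: "\<And>i j k. degN k \<noteq> degN i + degN j \<Longrightarrow> C i j k = 0"
    and commute_13: "\<And>k. C 1 3 k = 0"
    and ricci: "\<And>l. - (1/2) * (\<Sum>i\<in>UNIV. \<Sum>j\<in>UNIV. (C l i j)\<^sup>2)
                      + (1/4) * (\<Sum>i\<in>UNIV. \<Sum>j\<in>UNIV. (C i j l)\<^sup>2) = c + degN l * t"
  shows "C 2 4 7 = 0" "C 2 5 7 = 0"
proof -
  define F where "F i j k = (wN k - wN i - wN j) * (C i j k)\<^sup>2" for i j k
  have F_nonneg: "F i j k \<ge> 0" for i j k
  proof (cases "C i j k = 0")
    case False
    moreover have "C i i k = 0" "C 3 1 k = 0" using anti[of i i k] anti[of 1 3 k] commute_13
      by simp_all
    ultimately have "degN k = degN i + degN j" "i \<noteq> j" "{i, j} \<noteq> {1, 3}"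
      using graded commute_13 by (auto simp: doubleton_eq_iff)
    then show ?thesis unfolding F_def by (intro mult_nonneg_nonneg wN_admissible) simp_all
  qed (simp add: F_def)
  have "(1/4) * (\<Sum>i\<in>UNIV. \<Sum>j\<in>UNIV. \<Sum>k\<in>UNIV. F i j k) = (\<Sum>l\<in>UNIV. wN l * (c + degN l * t))"
    using weighted_ricci_sum[of C wN, OF anti] by (simp only: ricci F_def)
  also have "\<dots> = 0"
    by (simp add: sum_UNIV_7 wN_def degN_def algebra_simps)
  finally have "(\<Sum>i\<in>UNIV. \<Sum>j\<in>UNIV. \<Sum>k\<in>UNIV. F i j k) = 0" by simp
  then have "F i j k = 0" for i j k
    using F_nonneg by (simp add: sum_nonneg_eq_0_iff sum_nonneg)
  from this[of 2 4 7] this[of 2 5 7] show "C 2 4 7 = 0" "C 2 5 7 = 0"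
    by (simp_all add: F_def wN_def)
qed

lemma brN_adapted_basis_contradiction:
  fixes u :: "7 \<Rightarrow> real^7"
  assumes ip: "is_inner_product ip" and u: "orthonormal_basis ip u"
    and ricci: "\<And>X Y. ricci_form brN ip u X Y = c * ip X Y + ip (D X) Y"
    and D_sym: "\<And>X Y. ip (D X) Y = ip X (D Y)" and der: "is_derivation brN D"
    and D: "grading_triangular degN t D" and "t \<noteq> 0"
  shows False
proof -
  obtain y where y: "orthonormal_system ip y" and eig: "\<And>k. D (y k) = (degN k * t) *\<^sub>R y k"
    and coords: "y 3 $ 2 = 0" "y 2 $ 2 \<noteq> 0" "y 4 $ 5 = 0" "y 4 $ 4 \<noteq> 0" "y 5 $ 5 \<noteq> 0"
    using degN_adapted_eigenbasis[OF ip D_sym D \<open>t \<noteq> 0\<close>] by metis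
  have y_basis: "orthonormal_basis ip y" by (rule orthonormal_system_is_basis[OF ip u y])
  define C where "C i j k = ip (brN (y i) (y j)) (y k)" for i j k
  have graded: "C i j k = 0" if "degN k \<noteq> degN i + degN j" for i j k
    unfolding C_def
    by (rule derivation_structure_constants_graded[where y = y and deg = degN and i = i and j = j
          and k = k, OF ip D_sym der bilinear_brN \<open>t \<noteq> 0\<close> eig that])
  have anti: "C j i k = - C i j k" for i j k
    unfolding C_def by (subst brN_antisym) (simp add: is_inner_product_simps[OF ip])
  have "brN (y 1) (y 3) = 0"
    using brN_degree_1_2_bracket[OF der D \<open>t \<noteq> 0\<close>] eig[of 1] eig[of 3] coords(1)
    by (simp add: degN_def)
  then have commute_13: "C 1 3 k = 0" for k by (simp add: C_def is_inner_product_simps[OF ip])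
  have ricci_y: "- (1/2) * (\<Sum>i\<in>UNIV. \<Sum>j\<in>UNIV. (C l i j)\<^sup>2)
      + (1/4) * (\<Sum>i\<in>UNIV. \<Sum>j\<in>UNIV. (C i j l)\<^sup>2) = c + degN l * t" for l
    unfolding C_def
    by (rule nilsoliton_ricci_eigenbasis_diagonal[OF ip u y_basis bilinear_brN ricci eig])
  have obstruction: "C 2 4 7 = 0" "C 2 5 7 = 0"
    using degN_weighted_obstruction[of C c t, OF anti graded commute_13 ricci_y] by blast+
  have "C 2 m k = 0" if "m \<in> {4, 5}" for m k
  proof (cases "k = 7")
    case False
    have "degN 2 + degN m = 5" using that by (auto simp: degN_def)
    with False show ?thesis by (intro graded) (simp add: degN_eq_5_iff)
  qed (use that obstruction in auto)
  then have bracket_0: "brN (y 2) (y m) = 0" if "m \<in> {4, 5}" for m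
    using that by (intro orthonormal_basis_orthogonal_eq_0[OF ip y_basis]) (simp add: C_def)
  have "y 2 $ 2 = 0"
    by (rule brN_degree_2_3_pairing_nondegenerate[OF D \<open>t \<noteq> 0\<close> eig eig coords(3-5) bracket_0])
  with coords(2) show False ..
qed

theorem mainTheorem6:
  shows "\<not> einstein_nilradical brN"
proof
  assume "einstein_nilradical brN"
  then obtain ip where ip: "is_inner_product ip" and "is_nilsoliton brN ip"
    unfolding einstein_nilradical_def by blast
  then obtain u D c where u: "orthonormal_basis ip u" and der: "is_derivation brN D"
    and ricci: "\<And>X Y. ricci_form brN ip u X Y = c * ip X Y + ip (D X) Y"
    and D_sym: "\<And>X Y. ip (D X) Y = ip X (D Y)"
    by (rule nilsoliton_ricci_form) blast
  define t where "t = D (ee 1) $ 1"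
  have D: "grading_triangular degN t D"
    unfolding t_def by (rule derivation_brN_grading_triangular[OF der])
  have "t \<noteq> 0"
    using brN_nilsoliton_derivation_positive[OF ip u ricci D] by simp
  show False
    by (rule brN_adapted_basis_contradiction[OF ip u ricci D_sym der D \<open>t \<noteq> 0\<close>])
qed

end
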